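(* Let $\lambda\ne0$. For each $\alpha>0$, the function $L_2(E)=2\int_{\alpha}^{\kappa_M(E)}\frac{d\kappa}{\sqrt{E-F(\kappa)}}$ is real analytic on $(F(\alpha),\infty)$. Moreover, for each $\alpha\in(0,2\sqrt{|\lambda|})$, $L_2(E)\to0$ as $E\to\infty$.
   Context: $F(\kappa)=\frac14\kappa^4-\frac{\lambda^2}{2}\kappa^2$; $\kappa_M(E)=\sqrt{\lambda^2+\sqrt{\lambda^4+4E}}$ for $E>-\lambda^4/4$. *)

theory Defs
  imports "HOL-Analysis.Analysis"
begin

definition F :: "real \<Rightarrow> real \<Rightarrow> real" where
  "F lam k = k^4 / 4 - lam^2 / 2 * k^2"

definition kappaM :: "real \<Rightarrow> real \<Rightarrow> real" where
  "kappaM lam E = sqrt (lam^2 + sqrt (lam^4 + 4 * E))"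

text \<open>L_2(E) = 2 * integral from alpha to kappa_M(E) of 1/sqrt(E - F(k)) (improper at the
  upper endpoint; taken as a Lebesgue integral on the interval).\<close>
definition L2 :: "real \<Rightarrow> real \<Rightarrow> real \<Rightarrow> real" where
  "L2 lam alpha E = 2 * (LBINT k=alpha..kappaM lam E. 1 / sqrt (E - F lam k))"

definition real_analytic_on :: "(real \<Rightarrow> real) \<Rightarrow> real set \<Rightarrow> bool" where
  "real_analytic_on f S \<longleftrightarrow>
     (\<forall>x\<in>S. \<exists>r>0. \<exists>a :: nat \<Rightarrow> real.
        \<forall>y. \<bar>y - x\<bar> < r \<longrightarrow> (\<lambda>n. a n * (y - x)^n) sums f y)"

end

theory Submission
  imports Defs "HOL-Real_Asymp.Real_Asymp"
begin

text \<open>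
  Put \<open>c = \<lambda>^2 - \<alpha>^2\<close> and \<open>s = sqrt (\<lambda>^4 + 4 E)\<close>. The substitution
  \<open>\<kappa>^2 = \<alpha>^2 + (s + c) t\<close> maps \<open>[\<alpha>, \<kappa>\<^sub>M(E)]\<close> onto \<open>[0, 1]\<close> and turns \<open>L\<^sub>2(E)\<close> into
  \<open>2 J(s)\<close>, where the integrand of \<open>J(s)\<close> is \<open>(1 - t) powr (-1/2)\<close> times powers of three
  functions that are affine in \<open>s\<close> and, for \<open>s\<close> near a fixed \<open>s\<^sub>0 > |c|\<close>, bounded away
  from \<open>0\<close> uniformly in \<open>t\<close>. Expanding these powers by the binomial series gives a power
  series in \<open>s - s\<^sub>0\<close> whose coefficients are dominated by a multiple of \<open>(1 - t) powr (-1/2)\<close>,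
  so it can be integrated termwise: \<open>J\<close> is analytic, and so is \<open>L\<^sub>2\<close>, being \<open>2 J\<close> composed
  with the analytic map \<open>E \<mapsto> s\<close>. For large \<open>s\<close> the integrand is at most
  \<open>sqrt (2 / s) (t powr (-1/2) + (1 - t) powr (-1/2))\<close>, hence \<open>L\<^sub>2(E) = O(E powr (-1/4))\<close>.
\<close>

lemma powr_neg_half: "0 < (x::real) \<Longrightarrow> x powr - (1/2) = 1 / sqrt x"
  by (simp add: powr_minus_divide powr_half_sqrt)

lemma integral_powr_neg_half:
  shows "set_integrable lborel (einterval 0 1) (\<lambda>t::real. t powr (-1/2))"
    and "(LBINT t=0..1. t powr (-1/2)) = 2"
proof -
  have D: "DERIV (\<lambda>t. 2 * sqrt t) x :> x powr (-1/2)" if "0 < ereal x" for x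
  proof -
    from that have x: "0 < x" by simp
    have "DERIV (\<lambda>t. 2 * sqrt t) x :> 2 * (inverse (sqrt x) / 2)"
      using x by (auto intro!: derivative_eq_intros)
    then show ?thesis using powr_neg_half[OF x] by (simp add: inverse_eq_divide)
  qed
  have C: "isCont (\<lambda>t::real. t powr (-1/2)) x" if "0 < ereal x" for x
    using that by (auto intro!: continuous_intros)
  have A: "(((\<lambda>t. 2 * sqrt t) \<circ> real_of_ereal) \<longlongrightarrow> 0) (at_right 0)"
    by (auto simp: zero_ereal_def ereal_tendsto_simps intro!: tendsto_eq_intros)
  have B: "(((\<lambda>t. 2 * sqrt t) \<circ> real_of_ereal) \<longlongrightarrow> 2) (at_left 1)"
    by (auto simp: one_ereal_def ereal_tendsto_simps intro!: tendsto_eq_intros)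
  note FTC = interval_integral_FTC_nonneg[of 0 1 "\<lambda>t. 2 * sqrt t" "\<lambda>t. t powr (-1/2)" 0 2,
      OF _ D C _ A B]
  show "set_integrable lborel (einterval 0 1) (\<lambda>t::real. t powr (-1/2))"
    and "(LBINT t=0..1. t powr (-1/2)) = 2"
    using FTC by auto
qed

lemma integral_one_minus_powr_neg_half:
  shows "set_integrable lborel (einterval 0 1) (\<lambda>t::real. (1 - t) powr (-1/2))"
    and "(LBINT t=0..1. (1 - t) powr (-1/2)) = 2"
proof -
  have D: "DERIV (\<lambda>t. - 2 * sqrt (1 - t)) x :> (1 - x) powr (-1/2)" if "ereal x < 1" for x
  proof -
    from that have x: "x < 1" by simp
    have "DERIV (\<lambda>t. - 2 * sqrt (1 - t)) x :> - 2 * (inverse (sqrt (1 - x)) / 2 * (0 - 1))"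
      using x by (auto intro!: derivative_eq_intros)
    then show ?thesis using powr_neg_half[of "1 - x"] x by (simp add: inverse_eq_divide)
  qed
  have C: "isCont (\<lambda>t::real. (1 - t) powr (-1/2)) x" if "ereal x < 1" for x
    using that by (auto intro!: continuous_intros)
  have A: "(((\<lambda>t. - 2 * sqrt (1 - t)) \<circ> real_of_ereal) \<longlongrightarrow> -2) (at_right 0)"
    by (auto simp: zero_ereal_def ereal_tendsto_simps intro!: tendsto_eq_intros)
  have B: "(((\<lambda>t. - 2 * sqrt (1 - t)) \<circ> real_of_ereal) \<longlongrightarrow> 0) (at_left 1)"
    by (auto simp: one_ereal_def ereal_tendsto_simps intro!: tendsto_eq_intros)
  note FTC = interval_integral_FTC_nonneg[of 0 1 "\<lambda>t. - 2 * sqrt (1 - t)"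
      "\<lambda>t. (1 - t) powr (-1/2)" "-2" 0, OF _ D C _ A B]
  show "set_integrable lborel (einterval 0 1) (\<lambda>t::real. (1 - t) powr (-1/2))"
    and "(LBINT t=0..1. (1 - t) powr (-1/2)) = 2"
    using FTC by auto
qed

subsection \<open>Absolutely convergent power series\<close>

definition abs_powser_le :: "(nat \<Rightarrow> real) \<Rightarrow> real \<Rightarrow> real \<Rightarrow> bool" where
  "abs_powser_le a \<rho> M \<longleftrightarrow> summable (\<lambda>n. \<bar>a n\<bar> * \<rho>^n) \<and> (\<Sum>n. \<bar>a n\<bar> * \<rho>^n) \<le> M"

lemma abs_powser_le_nonneg:
  assumes "abs_powser_le a \<rho> M" and "0 \<le> \<rho>"
  shows "0 \<le> M"
proof -
  have "0 \<le> (\<Sum>n. \<bar>a n\<bar> * \<rho>^n)"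
    using assms by (intro suminf_nonneg) (auto simp: abs_powser_le_def)
  moreover have "(\<Sum>n. \<bar>a n\<bar> * \<rho>^n) \<le> M" using assms(1) by (simp add: abs_powser_le_def)
  ultimately show ?thesis by linarith
qed

lemma abs_powser_le_mono: "abs_powser_le a \<rho> M \<Longrightarrow> M \<le> M' \<Longrightarrow> abs_powser_le a \<rho> M'"
  unfolding abs_powser_le_def by linarith

lemma abs_powser_le_comparison:
  assumes \<rho>: "0 \<le> \<rho>" and le: "\<And>n. \<bar>a n\<bar> * \<rho>^n \<le> m n" and m: "m sums M"
  shows "abs_powser_le a \<rho> M"
proof -
  have summ: "summable (\<lambda>n. \<bar>a n\<bar> * \<rho>^n)"
    using le \<rho> by (intro summable_comparison_test[OF _ sums_summable[OF m]]) auto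
  have "(\<Sum>n. \<bar>a n\<bar> * \<rho>^n) \<le> M"
    using suminf_le[OF le summ sums_summable[OF m]] sums_unique[OF m] by simp
  with summ show ?thesis by (simp add: abs_powser_le_def)
qed

lemma abs_powser_le_cmult:
  assumes "abs_powser_le a \<rho> M" and "0 \<le> k"
  shows "abs_powser_le (\<lambda>n. k * a n) \<rho> (k * M)"
proof -
  have "summable (\<lambda>n. \<bar>a n\<bar> * \<rho>^n)" and "(\<Sum>n. \<bar>a n\<bar> * \<rho>^n) \<le> M"
    using assms(1) by (simp_all add: abs_powser_le_def)
  then show ?thesis
    using assms(2) suminf_mult[of "\<lambda>n. \<bar>a n\<bar> * \<rho>^n" k]
    by (simp add: abs_powser_le_def abs_mult mult.assoc summable_mult mult_left_mono)
qed

lemma abs_powser_le_radius_mono: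
  assumes "abs_powser_le a \<rho> M" and "0 \<le> r" and "r \<le> \<rho>"
  shows "abs_powser_le a r M"
proof -
  have summ: "summable (\<lambda>n. \<bar>a n\<bar> * \<rho>^n)" and le_M: "(\<Sum>n. \<bar>a n\<bar> * \<rho>^n) \<le> M"
    using assms(1) by (simp_all add: abs_powser_le_def)
  have "\<bar>a n\<bar> * r^n \<le> \<bar>a n\<bar> * \<rho>^n" for n
    using assms(2,3) by (intro mult_left_mono power_mono) auto
  from abs_powser_le_comparison[OF assms(2) this summable_sums[OF summ]]
  show ?thesis using le_M by (rule abs_powser_le_mono)
qed

lemma abs_powser_le_term:
  assumes "abs_powser_le a \<rho> M" and "0 \<le> \<rho>"
  shows "\<bar>a n\<bar> * \<rho>^n \<le> M"
proof -
  have "\<bar>a n\<bar> * \<rho>^n = (\<Sum>m\<in>{n}. \<bar>a m\<bar> * \<rho>^m)" by simp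
  also have "\<dots> \<le> (\<Sum>m. \<bar>a m\<bar> * \<rho>^m)"
    using assms unfolding abs_powser_le_def by (intro sum_le_suminf) auto
  also have "\<dots> \<le> M" using assms unfolding abs_powser_le_def by simp
  finally show ?thesis .
qed

lemma abs_powser_le_partial_sum:
  assumes "abs_powser_le a \<rho> M" and "\<bar>\<delta>\<bar> \<le> \<rho>"
  shows "\<bar>\<Sum>n<N. a n * \<delta>^n\<bar> \<le> M"
proof -
  have "\<bar>\<Sum>n<N. a n * \<delta>^n\<bar> \<le> (\<Sum>n<N. \<bar>a n * \<delta>^n\<bar>)" by (rule sum_abs)
  also have "\<dots> \<le> (\<Sum>n<N. \<bar>a n\<bar> * \<rho>^n)"
    using assms(2) by (intro sum_mono) (auto simp: abs_mult power_abs intro!: mult_left_mono power_mono)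
  also have "\<dots> \<le> (\<Sum>n. \<bar>a n\<bar> * \<rho>^n)"
    using assms unfolding abs_powser_le_def by (intro sum_le_suminf) auto
  also have "\<dots> \<le> M" using assms(1) unfolding abs_powser_le_def by simp
  finally show ?thesis .
qed

lemma abs_powser_le_sums_abs:
  assumes "abs_powser_le a \<rho> M" and "\<bar>\<delta>\<bar> \<le> \<rho>" and "(\<lambda>n. a n * \<delta>^n) sums \<sigma>"
  shows "\<bar>\<sigma>\<bar> \<le> M"
proof (rule LIMSEQ_le_const2)
  show "(\<lambda>N. \<bar>\<Sum>n<N. a n * \<delta>^n\<bar>) \<longlonglongrightarrow> \<bar>\<sigma>\<bar>"
    using assms(3) unfolding sums_def by (rule tendsto_rabs)
  show "\<exists>N0. \<forall>N\<ge>N0. \<bar>\<Sum>n<N. a n * \<delta>^n\<bar> \<le> M"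
    using abs_powser_le_partial_sum[OF assms(1,2)] by blast
qed

subsection \<open>Binomial series\<close>

lemma abs_gbinomial_le_1:
  fixes a :: real
  assumes "\<bar>a\<bar> \<le> 1"
  shows "\<bar>a gchoose n\<bar> \<le> 1"
proof (induction n)
  case 0
  then show ?case by simp
next
  case (Suc k)
  have rec: "of_nat (Suc k) * (a gchoose Suc k) = (a - of_nat k) * (a gchoose k)"
    using gbinomial_absorption[of k a] gbinomial_absorb_comp[of a k] by simp
  have "\<bar>a - of_nat k\<bar> \<le> of_nat (Suc k)" using assms by auto
  then have "\<bar>(a - of_nat k) * (a gchoose k)\<bar> \<le> of_nat (Suc k) * 1"
    using mult_mono[OF _ Suc.IH] by (simp add: abs_mult)
  then have "of_nat (Suc k) * \<bar>a gchoose Suc k\<bar> \<le> of_nat (Suc k) * 1"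
    using rec by (metis abs_mult abs_of_nat)
  then show ?case by (simp del: of_nat_Suc)
qed

definition powr_affine_coeff :: "real \<Rightarrow> real \<Rightarrow> real \<Rightarrow> nat \<Rightarrow> real" where
  "powr_affine_coeff g p q n = p powr g * (g gchoose n) * (q / p)^n"

lemma powr_affine_sums:
  assumes p: "0 < p" and \<delta>: "\<bar>q * \<delta>\<bar> < p"
  shows "(\<lambda>n. powr_affine_coeff g p q n * \<delta>^n) sums (p + q * \<delta>) powr g"
proof -
  have z: "\<bar>q * \<delta> / p\<bar> < 1" using p \<delta> by (simp add: abs_divide divide_less_eq)
  have "(\<lambda>n. p powr g * ((g gchoose n) * (q * \<delta> / p)^n)) sums (p powr g * (1 + q * \<delta> / p) powr g)"
    by (rule sums_mult[OF gen_binomial_real[OF z]])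
  moreover have "p powr g * (1 + q * \<delta> / p) powr g = (p + q * \<delta>) powr g"
  proof -
    have "0 < 1 + q * \<delta> / p" using z by linarith
    then have "p powr g * (1 + q * \<delta> / p) powr g = (p * (1 + q * \<delta> / p)) powr g"
      using p by (simp add: powr_mult)
    also have "p * (1 + q * \<delta> / p) = p + q * \<delta>" using p by (simp add: field_simps)
    finally show ?thesis .
  qed
  moreover have "p powr g * ((g gchoose n) * (q * \<delta> / p)^n) = powr_affine_coeff g p q n * \<delta>^n" for n
    by (simp add: powr_affine_coeff_def power_mult_distrib power_divide mult_ac)
  ultimately show ?thesis by simp
qed

lemma abs_powser_le_powr_affine:
  assumes p: "0 < p" and \<rho>: "0 \<le> \<rho>" and q: "\<bar>q\<bar> * \<rho> \<le> p / 2" and g: "\<bar>g\<bar> \<le> 1"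
  shows "abs_powser_le (powr_affine_coeff g p q) \<rho> (2 * p powr g)"
proof -
  have le: "\<bar>powr_affine_coeff g p q n\<bar> * \<rho>^n \<le> p powr g * (1/2)^n" for n
  proof -
    have "\<bar>powr_affine_coeff g p q n\<bar> * \<rho>^n = p powr g * \<bar>g gchoose n\<bar> * (\<bar>q\<bar> * \<rho> / p)^n"
      using p \<rho> by (simp add: powr_affine_coeff_def abs_mult power_abs power_divide power_mult_distrib)
    also have "\<dots> \<le> p powr g * 1 * (1/2)^n"
      using p q \<rho> abs_gbinomial_le_1[OF g]
      by (intro mult_mono power_mono) (auto simp: divide_le_eq)
    finally show ?thesis by simp
  qed
  have geom: "(\<lambda>n. p powr g * (1/2::real)^n) sums (2 * p powr g)"
    using sums_mult[OF geometric_sums[of "1/2::real"], of "p powr g"] by (simp add: mult.commute)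
  from abs_powser_le_comparison[OF \<rho> le geom] show ?thesis .
qed

lemma powr_affine_series_radius:
  assumes \<rho>: "0 < \<rho>" and p: "4 * \<rho> \<le> p" and q: "\<bar>q\<bar> \<le> 2" and g: "\<bar>g\<bar> \<le> 1"
  shows "abs_powser_le (powr_affine_coeff g p q) \<rho> (2 * p powr g)"
    and "\<bar>\<delta>\<bar> \<le> \<rho> \<Longrightarrow> (\<lambda>n. powr_affine_coeff g p q n * \<delta>^n) sums (p + q * \<delta>) powr g"
proof -
  have "\<bar>q\<bar> * \<rho> \<le> 2 * \<rho>" using q \<rho> by (intro mult_right_mono) auto
  then show "abs_powser_le (powr_affine_coeff g p q) \<rho> (2 * p powr g)"
    using p g \<rho> by (intro abs_powser_le_powr_affine) linarith+
  assume \<delta>: "\<bar>\<delta>\<bar> \<le> \<rho>"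
  have "\<bar>q * \<delta>\<bar> \<le> 2 * \<rho>" unfolding abs_mult using q \<delta> by (intro mult_mono) auto
  then show "(\<lambda>n. powr_affine_coeff g p q n * \<delta>^n) sums (p + q * \<delta>) powr g"
    using p \<rho> by (intro powr_affine_sums) linarith+
qed

text \<open>The constant term is dropped, so the majorant is proportional to \<open>R\<close>: this keeps the
  inner series of the composition in \<open>L2_analytic\<close> within the radius of the outer one.\<close>

lemma sqrt_shift_series:
  fixes K R :: real
  assumes K: "0 < K" and R: "0 < R" "R \<le> K / 8"
  defines "b \<equiv> \<lambda>k. if k = 0 then 0 else powr_affine_coeff (1/2) K 4 k"
  shows "abs_powser_le b R (16 * R / sqrt K)"
    and "\<bar>e\<bar> \<le> R \<Longrightarrow> (\<lambda>k. b k * e^k) sums (sqrt (K + 4 * e) - sqrt K)"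
proof -
  define q where "q = 4 * R / K"
  have q: "0 < q" "q \<le> 1/2" using K R by (simp_all add: q_def field_simps)
  have le: "\<bar>b k\<bar> * R^k \<le> 2 * sqrt K * q * (1/2)^k" for k
  proof (cases k)
    case 0
    then show ?thesis using q K by (simp add: b_def)
  next
    case (Suc j)
    have "\<bar>b k\<bar> * R^k = K powr (1/2) * \<bar>(1/2) gchoose k\<bar> * q^k"
      using Suc K R
      by (simp add: b_def powr_affine_coeff_def q_def abs_mult power_abs power_divide power_mult_distrib)
    also have "\<dots> \<le> K powr (1/2) * 1 * q^k"
      using q by (intro mult_mono abs_gbinomial_le_1 order_refl) auto
    also have "\<dots> \<le> K powr (1/2) * 1 * (q * (1/2)^j)"
    proof -
      have "q^k \<le> q * (1/2)^j" using Suc q by (simp add: mult_left_mono power_mono)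
      then show ?thesis by (simp add: mult_left_mono)
    qed
    also have "\<dots> = 2 * sqrt K * q * (1/2)^k"
      using Suc K by (simp add: powr_half_sqrt)
    finally show ?thesis .
  qed
  have geom: "(\<lambda>k. 2 * sqrt K * q * (1/2::real)^k) sums (4 * sqrt K * q)"
    using sums_mult[OF geometric_sums[of "1/2::real"], of "2 * sqrt K * q"] by (simp add: mult.assoc)
  have "16 * R / sqrt K = 16 * R * sqrt K / K"
    using K by (simp add: field_simps)
  then have "4 * sqrt K * q = 16 * R / sqrt K"
    by (simp add: q_def)
  with abs_powser_le_comparison[OF _ le geom] R show "abs_powser_le b R (16 * R / sqrt K)"
    by simp
  assume e: "\<bar>e\<bar> \<le> R"
  have e4: "\<bar>4 * e\<bar> < K" using e R by simp
  have "(\<lambda>k. powr_affine_coeff (1/2) K 4 k * e^k - (if k = 0 then K powr (1/2) else 0))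
          sums ((K + 4 * e) powr (1/2) - K powr (1/2))"
    by (intro sums_diff powr_affine_sums K e4) (use sums_single[of 0 "\<lambda>_. K powr (1/2)"] in simp)
  moreover have "(\<lambda>k. powr_affine_coeff (1/2) K 4 k * e^k - (if k = 0 then K powr (1/2) else 0))
      = (\<lambda>k. b k * e^k)"
    by (rule ext) (simp add: b_def powr_affine_coeff_def)
  moreover have "(K + 4 * e) powr (1/2) - K powr (1/2) = sqrt (K + 4 * e) - sqrt K"
    using e4 K by (simp add: powr_half_sqrt)
  ultimately show "(\<lambda>k. b k * e^k) sums (sqrt (K + 4 * e) - sqrt K)" by simp
qed

subsection \<open>Products and composition of power series\<close>

definition cauchy_prod :: "(nat \<Rightarrow> real) \<Rightarrow> (nat \<Rightarrow> real) \<Rightarrow> nat \<Rightarrow> real" where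
  "cauchy_prod a b n = (\<Sum>i\<le>n. a i * b (n - i))"

lemma cauchy_prod_sums:
  assumes "abs_powser_le a \<rho> Ma" and "abs_powser_le b \<rho> Mb" and \<delta>: "\<bar>\<delta>\<bar> \<le> \<rho>"
    and "(\<lambda>n. a n * \<delta>^n) sums A" and "(\<lambda>n. b n * \<delta>^n) sums B"
  shows "(\<lambda>n. cauchy_prod a b n * \<delta>^n) sums (A * B)"
proof -
  have norm_summable: "summable (\<lambda>n. norm (c n * \<delta>^n))" if "abs_powser_le c \<rho> M" for c M
  proof (rule summable_comparison_test)
    show "\<exists>N. \<forall>n\<ge>N. norm (norm (c n * \<delta>^n)) \<le> \<bar>c n\<bar> * \<rho>^n"
      using \<delta> by (auto simp: abs_mult power_abs intro!: mult_left_mono power_mono)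
    show "summable (\<lambda>n. \<bar>c n\<bar> * \<rho>^n)" using that by (simp add: abs_powser_le_def)
  qed
  have "(\<lambda>k. \<Sum>i\<le>k. (a i * \<delta>^i) * (b (k - i) * \<delta>^(k - i)))
          sums ((\<Sum>k. a k * \<delta>^k) * (\<Sum>k. b k * \<delta>^k))"
    using assms(1,2) by (intro Cauchy_product_sums norm_summable)
  moreover have "(\<Sum>i\<le>k. (a i * \<delta>^i) * (b (k - i) * \<delta>^(k - i))) = cauchy_prod a b k * \<delta>^k" for k
    unfolding cauchy_prod_def sum_distrib_right
  proof (rule sum.cong)
    fix i assume "i \<in> {..k}"
    then have "\<delta>^i * \<delta>^(k - i) = \<delta>^k" by (simp add: power_add[symmetric])
    moreover have "(a i * \<delta>^i) * (b (k - i) * \<delta>^(k - i)) = a i * b (k - i) * (\<delta>^i * \<delta>^(k - i))"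
      by (simp only: mult_ac)
    ultimately show "(a i * \<delta>^i) * (b (k - i) * \<delta>^(k - i)) = a i * b (k - i) * \<delta>^k"
      by simp
  qed simp
  moreover have "(\<Sum>k. a k * \<delta>^k) = A" "(\<Sum>k. b k * \<delta>^k) = B"
    using sums_unique[OF assms(4)] sums_unique[OF assms(5)] by simp_all
  ultimately show ?thesis by simp
qed

lemma abs_powser_le_cauchy_prod:
  assumes a: "abs_powser_le a \<rho> Ma" and b: "abs_powser_le b \<rho> Mb" and \<rho>: "0 \<le> \<rho>"
  shows "abs_powser_le (cauchy_prod a b) \<rho> (Ma * Mb)"
proof -
  define Sa where "Sa = (\<Sum>n. \<bar>a n\<bar> * \<rho>^n)"
  define Sb where "Sb = (\<Sum>n. \<bar>b n\<bar> * \<rho>^n)"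
  have abs_a: "abs_powser_le (\<lambda>n. \<bar>a n\<bar>) \<rho> Sa" and abs_b: "abs_powser_le (\<lambda>n. \<bar>b n\<bar>) \<rho> Sb"
    using a b by (simp_all add: abs_powser_le_def Sa_def Sb_def)
  have S: "(\<lambda>n. cauchy_prod (\<lambda>n. \<bar>a n\<bar>) (\<lambda>n. \<bar>b n\<bar>) n * \<rho>^n) sums (Sa * Sb)"
    using abs_a abs_b \<rho> unfolding Sa_def Sb_def
    by (intro cauchy_prod_sums summable_sums) (auto simp: abs_powser_le_def)
  have le: "\<bar>cauchy_prod a b n\<bar> * \<rho>^n \<le> cauchy_prod (\<lambda>n. \<bar>a n\<bar>) (\<lambda>n. \<bar>b n\<bar>) n * \<rho>^n" for n
  proof -
    have "\<bar>cauchy_prod a b n\<bar> \<le> cauchy_prod (\<lambda>n. \<bar>a n\<bar>) (\<lambda>n. \<bar>b n\<bar>) n"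
      unfolding cauchy_prod_def by (rule order_trans[OF sum_abs]) (simp add: abs_mult)
    then show ?thesis using \<rho> by (simp add: mult_right_mono)
  qed
  have summ: "summable (\<lambda>n. \<bar>cauchy_prod a b n\<bar> * \<rho>^n)"
    using le \<rho> by (intro summable_comparison_test[OF _ sums_summable[OF S]]) auto
  have "(\<Sum>n. \<bar>cauchy_prod a b n\<bar> * \<rho>^n) \<le> Sa * Sb"
    using suminf_le[OF le summ sums_summable[OF S]] sums_unique[OF S] by simp
  also have "\<dots> \<le> Ma * Mb"
    using a b \<rho> abs_powser_le_nonneg[OF abs_a \<rho>] abs_powser_le_nonneg[OF abs_b \<rho>]
    by (intro mult_mono) (auto simp: abs_powser_le_def Sa_def Sb_def)
  finally show ?thesis using summ by (simp add: abs_powser_le_def)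
qed

primrec cauchy_pow :: "(nat \<Rightarrow> real) \<Rightarrow> nat \<Rightarrow> nat \<Rightarrow> real" where
  "cauchy_pow b 0 = (\<lambda>j. if j = 0 then 1 else 0)"
| "cauchy_pow b (Suc n) = cauchy_prod b (cauchy_pow b n)"

lemma abs_powser_le_cauchy_pow:
  assumes "abs_powser_le b \<rho> X" and "0 \<le> \<rho>"
  shows "abs_powser_le (cauchy_pow b n) \<rho> (X^n)"
proof (induction n)
  case 0
  have "(\<lambda>j. \<bar>cauchy_pow b 0 j\<bar> * \<rho>^j) = (\<lambda>j. if j = 0 then 1 else 0)" by auto
  with sums_single[of 0 "\<lambda>_. 1::real"] have "(\<lambda>j. \<bar>cauchy_pow b 0 j\<bar> * \<rho>^j) sums 1"
    by simp
  from abs_powser_le_comparison[OF assms(2) order_refl this] show ?case by simp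
next
  case (Suc n)
  then show ?case using abs_powser_le_cauchy_prod[OF assms(1) Suc assms(2)] by simp
qed

lemma cauchy_pow_sums:
  assumes b: "abs_powser_le b \<rho> X" and e: "\<bar>e\<bar> \<le> \<rho>" and sums: "(\<lambda>k. b k * e^k) sums \<sigma>"
  shows "(\<lambda>j. cauchy_pow b n j * e^j) sums \<sigma>^n"
proof (induction n)
  case 0
  have "(\<lambda>j. cauchy_pow b 0 j * e^j) = (\<lambda>j. if j = 0 then 1 else 0)" by auto
  then show ?case using sums_single[of 0 "\<lambda>_. 1::real"] by simp
next
  case (Suc n)
  have "0 \<le> \<rho>" using e by linarith
  from cauchy_prod_sums[OF b abs_powser_le_cauchy_pow[OF b this] e sums Suc]
  show ?case by simp
qed

lemma abs_summable_on_pairs_by_rows: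
  fixes f :: "nat \<Rightarrow> nat \<Rightarrow> real"
  assumes rows: "\<And>n. summable (\<lambda>j. \<bar>f n j\<bar>)" and "summable (\<lambda>n. \<Sum>j. \<bar>f n j\<bar>)"
  shows "(\<lambda>(n, j). norm (f n j)) summable_on UNIV"
proof -
  have "((\<lambda>j. \<bar>f n j\<bar>) has_sum (\<Sum>j. \<bar>f n j\<bar>)) UNIV" for n
    using rows by (intro sums_nonneg_imp_has_sum summable_sums) auto
  moreover have "(\<lambda>n. \<Sum>j. \<bar>f n j\<bar>) summable_on UNIV"
    using assms by (subst summable_on_UNIV_nonneg_real_iff) (auto intro: suminf_nonneg)
  ultimately have "(\<lambda>(n, j). \<bar>f n j\<bar>) summable_on UNIV \<times> UNIV"
    using summable_on_SigmaI[where f = "\<lambda>(n, j). \<bar>f n j\<bar>" and A = UNIV and B = "\<lambda>_. UNIV"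
        and g = "\<lambda>n. \<Sum>j. \<bar>f n j\<bar>"] by auto
  then show ?thesis by (simp add: case_prod_unfold)
qed

lemma suminf_swap_sums:
  fixes f :: "nat \<Rightarrow> nat \<Rightarrow> real"
  assumes abs: "(\<lambda>(n, j). norm (f n j)) summable_on UNIV" and rows: "(\<lambda>n. \<Sum>j. f n j) sums R"
  shows "(\<lambda>j. \<Sum>n. f n j) sums R"
proof -
  have line_sum: "((\<lambda>y. g x y) has_sum (\<Sum>y. g x y)) UNIV"
    if "(\<lambda>(x, y). norm (g x y)) summable_on UNIV \<times> UNIV" for g :: "nat \<Rightarrow> nat \<Rightarrow> real" and x
  proof -
    have "summable (\<lambda>y. norm (g x y))"
      using summable_on_SigmaD1[OF that, of x] by (auto intro: summable_on_imp_summable)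
    then show ?thesis
      by (intro norm_summable_imp_has_sum summable_sums) (auto intro: summable_norm_cancel)
  qed
  have abs_rows: "(\<lambda>(n, j). norm (f n j)) summable_on UNIV \<times> UNIV"
    using abs by simp
  have abs_cols: "(\<lambda>(j, n). norm (f n j)) summable_on UNIV \<times> UNIV"
    using summable_on_swap[where f = "\<lambda>(n, j). norm (f n j)" and A = UNIV and B = UNIV] abs_rows by simp
  have "(\<lambda>(n, j). f n j) summable_on UNIV \<times> UNIV"
    by (rule abs_summable_summable) (use abs_rows in \<open>simp add: case_prod_unfold\<close>)
  then obtain S where S: "((\<lambda>(n, j). f n j) has_sum S) (UNIV \<times> UNIV)"
    by (auto simp: summable_on_def)
  have "((\<lambda>n. \<Sum>j. f n j) has_sum S) UNIV"
    by (rule has_sum_Sigma'[OF S]) (simp add: line_sum[OF abs_rows])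
  then have "R = S" using rows has_sum_imp_sums sums_unique2 by blast
  have S': "((\<lambda>(j, n). f n j) has_sum S) (UNIV \<times> UNIV)"
    using has_sum_swap[where f = "\<lambda>(n, j). f n j" and A = UNIV and B = UNIV] S by simp
  have "((\<lambda>j. \<Sum>n. f n j) has_sum S) UNIV"
    by (rule has_sum_Sigma'[OF S']) (simp add: line_sum[of "\<lambda>j n. f n j", OF abs_cols])
  then show ?thesis using \<open>R = S\<close> has_sum_imp_sums by blast
qed

lemma powser_compose_sums:
  fixes A b :: "nat \<Rightarrow> real"
  assumes outer: "\<And>d. \<bar>d\<bar> < \<rho> \<Longrightarrow> (\<lambda>n. A n * d^n) sums G d"
    and b: "abs_powser_le b r X" and "X < \<rho>" and r: "0 < r"
    and e: "\<bar>e\<bar> \<le> r" and inner: "(\<lambda>k. b k * e^k) sums \<sigma>"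
  shows "(\<lambda>j. (\<Sum>n. A n * cauchy_pow b n j) * e^j) sums G \<sigma>"
proof -
  have X: "0 \<le> X" using abs_powser_le_nonneg[OF b] r by simp
  have "summable (\<lambda>n. A n * ((X + \<rho>) / 2)^n)"
    using X \<open>X < \<rho>\<close> by (intro sums_summable[OF outer]) auto
  then have A: "summable (\<lambda>n. \<bar>A n\<bar> * X^n)"
    using powser_insidea[of A "(X + \<rho>) / 2" X] X \<open>X < \<rho>\<close> by (simp add: abs_mult power_abs)
  have pow: "abs_powser_le (cauchy_pow b n) r (X^n)" for n
    using abs_powser_le_cauchy_pow[OF b] r by simp
  define f where "f n j = A n * (cauchy_pow b n j * e^j)" for n j
  have row: "summable (\<lambda>j. \<bar>f n j\<bar>) \<and> (\<Sum>j. \<bar>f n j\<bar>) \<le> \<bar>A n\<bar> * X^n" for n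
  proof -
    have "abs_powser_le (cauchy_pow b n) \<bar>e\<bar> (X^n)"
      using abs_powser_le_radius_mono[OF pow] e by simp
    then have "abs_powser_le (\<lambda>j. \<bar>A n\<bar> * cauchy_pow b n j) \<bar>e\<bar> (\<bar>A n\<bar> * X^n)"
      by (rule abs_powser_le_cmult) simp
    then show ?thesis
      unfolding abs_powser_le_def f_def by (simp add: abs_mult power_abs mult.assoc)
  qed
  have abs: "(\<lambda>(n, j). norm (f n j)) summable_on UNIV"
  proof (rule abs_summable_on_pairs_by_rows)
    show "summable (\<lambda>j. \<bar>f n j\<bar>)" for n using row by blast
    show "summable (\<lambda>n. \<Sum>j. \<bar>f n j\<bar>)"
    proof (rule summable_comparison_test[OF _ A], intro exI allI impI)
      fix n
      have "0 \<le> (\<Sum>j. \<bar>f n j\<bar>)" using row[of n] by (intro suminf_nonneg) auto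
      then show "norm (\<Sum>j. \<bar>f n j\<bar>) \<le> \<bar>A n\<bar> * X^n" using row[of n] by simp
    qed
  qed
  have "\<bar>\<sigma>\<bar> < \<rho>" using abs_powser_le_sums_abs[OF b e inner] \<open>X < \<rho>\<close> by linarith
  moreover have "(\<Sum>j. f n j) = A n * \<sigma>^n" for n
    unfolding f_def by (intro sums_unique[symmetric] sums_mult cauchy_pow_sums[OF b e inner])
  ultimately have "(\<lambda>n. \<Sum>j. f n j) sums G \<sigma>" using outer by simp
  from suminf_swap_sums[OF abs this] have "(\<lambda>j. \<Sum>n. f n j) sums G \<sigma>" .
  moreover have "(\<Sum>n. f n j) = (\<Sum>n. A n * cauchy_pow b n j) * e^j" for j
  proof -
    have "\<bar>A n * cauchy_pow b n j\<bar> \<le> \<bar>A n\<bar> * X^n / r^j" for n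
    proof -
      have "\<bar>cauchy_pow b n j\<bar> \<le> X^n / r^j"
        using abs_powser_le_term[OF pow[of n], of j] r by (simp add: le_divide_eq)
      from mult_left_mono[OF this abs_ge_zero[of "A n"]] show ?thesis by (simp add: abs_mult)
    qed
    then have "summable (\<lambda>n. A n * cauchy_pow b n j)"
      by (intro summable_comparison_test[OF _ summable_divide[OF A]]) auto
    then show ?thesis unfolding f_def by (simp add: suminf_mult2 mult.assoc)
  qed
  ultimately show ?thesis by simp
qed

lemma powser_coeff_set_integrable:
  fixes c :: "nat \<Rightarrow> real \<Rightarrow> real"
  assumes S: "S \<in> sets lborel" and \<rho>: "0 < \<rho>" and meas: "c n \<in> borel_measurable lborel"
    and g: "set_integrable lborel S g"
    and bound: "\<And>t. t \<in> S \<Longrightarrow> abs_powser_le (\<lambda>n. c n t) \<rho> (g t)"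
  shows "set_integrable lborel S (c n)"
proof (rule set_integrable_bound)
  show "set_integrable lborel S (\<lambda>t. g t / \<rho>^n)" using g by (rule set_integrable_divide)
  show "set_borel_measurable lborel S (c n)"
    using S meas unfolding set_borel_measurable_def by measurable
  show "AE t in lborel. t \<in> S \<longrightarrow> norm (c n t) \<le> norm (g t / \<rho>^n)"
  proof (rule AE_I2, rule impI)
    fix t assume t: "t \<in> S"
    have "\<bar>c n t\<bar> * \<rho>^n \<le> g t" using abs_powser_le_term[OF bound[OF t]] \<rho> by simp
    moreover have "0 \<le> g t" using abs_powser_le_nonneg[OF bound[OF t]] \<rho> by simp
    ultimately show "norm (c n t) \<le> norm (g t / \<rho>^n)" using \<rho> by (simp add: le_divide_eq)
  qed
qed

lemma powser_set_integral_sums: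
  fixes c :: "nat \<Rightarrow> real \<Rightarrow> real"
  assumes S: "S \<in> sets lborel" and \<rho>: "0 < \<rho>" and \<delta>: "\<bar>\<delta>\<bar> \<le> \<rho>"
    and meas: "\<And>n. c n \<in> borel_measurable lborel" "h \<in> borel_measurable lborel"
    and g: "set_integrable lborel S g"
    and bound: "\<And>t. t \<in> S \<Longrightarrow> abs_powser_le (\<lambda>n. c n t) \<rho> (g t)"
    and sums: "\<And>t. t \<in> S \<Longrightarrow> (\<lambda>n. c n t * \<delta>^n) sums h t"
  shows "set_integrable lborel S h"
    and "(\<lambda>n. (LINT t:S|lborel. c n t) * \<delta>^n) sums (LINT t:S|lborel. h t)"
proof -
  have g0: "0 \<le> g t" if "t \<in> S" for t
    using abs_powser_le_nonneg[OF bound[OF that]] \<rho> by simp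
  have c: "set_integrable lborel S (c n)" for n
    using S \<rho> meas(1) g bound by (rule powser_coeff_set_integrable)
  have partial: "(\<Sum>n<N. (LINT t:S|lborel. c n t) * \<delta>^n)
      = (LINT t|lborel. indicator S t * (\<Sum>n<N. c n t * \<delta>^n))" for N
  proof -
    have "(LINT t|lborel. indicator S t * (\<Sum>n<N. c n t * \<delta>^n))
        = (LINT t|lborel. (\<Sum>n<N. (indicator S t * c n t) * \<delta>^n))"
      by (simp add: sum_distrib_left mult.assoc)
    also have "\<dots> = (\<Sum>n<N. (LINT t|lborel. indicator S t * c n t) * \<delta>^n)"
      using c by (subst Bochner_Integration.integral_sum) (auto simp: set_integrable_def)
    finally show ?thesis by (simp add: set_lebesgue_integral_def)
  qed
  show "set_integrable lborel S h"
  proof (rule set_integrable_bound[OF g])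
    show "set_borel_measurable lborel S h"
      using S meas(2) unfolding set_borel_measurable_def by measurable
    show "AE t in lborel. t \<in> S \<longrightarrow> norm (h t) \<le> norm (g t)"
      using abs_powser_le_sums_abs[OF bound \<delta> sums] g0 by auto
  qed
  have "(\<lambda>N. LINT t|lborel. indicator S t * (\<Sum>n<N. c n t * \<delta>^n))
      \<longlonglongrightarrow> (LINT t|lborel. indicator S t * h t)"
  proof (rule integral_dominated_convergence[where w = "\<lambda>t. indicator S t * g t"])
    show "(\<lambda>t. indicator S t * h t) \<in> borel_measurable lborel"
      and "(\<lambda>t. indicator S t * (\<Sum>n<N. c n t * \<delta>^n)) \<in> borel_measurable lborel" for N
      using S meas by measurable
    show "integrable lborel (\<lambda>t. indicator S t * g t)"
      using g by (simp add: set_integrable_def)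
    show "AE t in lborel. (\<lambda>N. indicator S t * (\<Sum>n<N. c n t * \<delta>^n)) \<longlonglongrightarrow> indicator S t * h t"
      using sums by (auto simp: sums_def indicator_def)
    show "AE t in lborel. norm (indicator S t * (\<Sum>n<N. c n t * \<delta>^n)) \<le> indicator S t * g t" for N
      using abs_powser_le_partial_sum[OF bound \<delta>] by (auto simp: indicator_def)
  qed
  then show "(\<lambda>n. (LINT t:S|lborel. c n t) * \<delta>^n) sums (LINT t:S|lborel. h t)"
    unfolding sums_def partial by (simp add: set_lebesgue_integral_def)
qed

subsection \<open>The integral after the substitution\<close>

text \<open>
  With \<open>c = \<lambda>\<^sup>2 - \<alpha>\<^sup>2\<close>, the substitution \<open>\<kappa>\<^sup>2 = \<alpha>\<^sup>2 + (s + c) t\<close> gives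
  \<open>E - F(\<kappa>) = (s + c) (1 - t) (s (1 + t) - c (1 - t)) / 4\<close> for \<open>s\<^sup>2 = \<lambda>\<^sup>4 + 4E\<close>;
  see \<open>L2_eq_J\<close>.
\<close>

definition J_kernel :: "real \<Rightarrow> real \<Rightarrow> real \<Rightarrow> real \<Rightarrow> real" where
  "J_kernel lam alpha s t = (s + (lam^2 - alpha^2)) powr (1/2)
      * (s * (1 + t) - (lam^2 - alpha^2) * (1 - t)) powr (-1/2)
      * (alpha^2 + (s + (lam^2 - alpha^2)) * t) powr (-1/2) * (1 - t) powr (-1/2)"

definition J :: "real \<Rightarrow> real \<Rightarrow> real \<Rightarrow> real" where
  "J lam alpha s = (LINT t:einterval 0 1|lborel. J_kernel lam alpha s t)"

definition J_radius :: "real \<Rightarrow> real \<Rightarrow> real \<Rightarrow> real" where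
  "J_radius lam alpha s0 = min (s0 - \<bar>lam^2 - alpha^2\<bar>) (alpha^2) / 4"

definition J_coeff :: "real \<Rightarrow> real \<Rightarrow> real \<Rightarrow> nat \<Rightarrow> real \<Rightarrow> real" where
  "J_coeff lam alpha s0 n t = (1 - t) powr (-1/2) *
     cauchy_prod
       (cauchy_prod (powr_affine_coeff (1/2) (s0 + (lam^2 - alpha^2)) 1)
                    (powr_affine_coeff (-1/2) (s0 * (1 + t) - (lam^2 - alpha^2) * (1 - t)) (1 + t)))
       (powr_affine_coeff (-1/2) (alpha^2 + (s0 + (lam^2 - alpha^2)) * t) t) n"

lemma J_radius_bounds:
  assumes "0 < alpha" and "\<bar>lam^2 - alpha^2\<bar> < s0"
  shows "0 < J_radius lam alpha s0" and "4 * J_radius lam alpha s0 \<le> s0 + (lam^2 - alpha^2)"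
  using assms by (auto simp: J_radius_def min_def)

lemma J_factors_ge:
  fixes lam alpha s0 t :: real
  defines "c \<equiv> lam^2 - alpha^2"
  assumes s0: "\<bar>c\<bar> < s0" and t: "0 < t" "t < 1"
  shows "4 * J_radius lam alpha s0 \<le> s0 * (1 + t) - c * (1 - t)"
    and "4 * J_radius lam alpha s0 \<le> alpha^2 + (s0 + c) * t"
proof -
  have "c * (1 - t) \<le> \<bar>c\<bar> * 1" using t by (intro mult_mono) auto
  moreover have "s0 \<le> s0 * (1 + t)" using t s0 by (simp add: mult_le_cancel_left1)
  moreover have "0 \<le> (s0 + c) * t" using t s0 by (intro mult_nonneg_nonneg) auto
  ultimately show "4 * J_radius lam alpha s0 \<le> s0 * (1 + t) - c * (1 - t)"
    and "4 * J_radius lam alpha s0 \<le> alpha^2 + (s0 + c) * t"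
    using s0 unfolding J_radius_def c_def[symmetric] by (auto simp: min_def)
qed

lemma J_coeff_series:
  fixes lam alpha s0 :: real
  assumes alpha: "0 < alpha" and s0: "\<bar>lam^2 - alpha^2\<bar> < s0"
  obtains B where
    "\<And>t. 0 < t \<Longrightarrow> t < 1 \<Longrightarrow>
       abs_powser_le (\<lambda>n. J_coeff lam alpha s0 n t) (J_radius lam alpha s0) ((1 - t) powr (-1/2) * B)"
    "\<And>t \<delta>. 0 < t \<Longrightarrow> t < 1 \<Longrightarrow> \<bar>\<delta>\<bar> \<le> J_radius lam alpha s0 \<Longrightarrow>
       (\<lambda>n. J_coeff lam alpha s0 n t * \<delta>^n) sums J_kernel lam alpha (s0 + \<delta>) t"
proof -
  define c where "c = lam^2 - alpha^2"
  define \<rho> where "\<rho> = J_radius lam alpha s0"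
  define p2 where "p2 t = s0 * (1 + t) - c * (1 - t)" for t
  define p3 where "p3 t = alpha^2 + (s0 + c) * t" for t
  define a1 where "a1 = powr_affine_coeff (1/2) (s0 + c) 1"
  define a2 where "a2 t = powr_affine_coeff (-1/2) (p2 t) (1 + t)" for t
  define a3 where "a3 t = powr_affine_coeff (-1/2) (p3 t) t" for t
  note ge = J_factors_ge[OF s0, folded c_def \<rho>_def p2_def p3_def]
  have \<rho>: "0 < \<rho>" and p1: "4 * \<rho> \<le> s0 + c"
    using J_radius_bounds[OF alpha s0] by (simp_all add: \<rho>_def c_def)
  note factor = powr_affine_series_radius[OF \<rho>]
  have b1: "abs_powser_le a1 \<rho> (2 * (s0 + c) powr (1/2))"
    and s1: "\<bar>\<delta>\<bar> \<le> \<rho> \<Longrightarrow> (\<lambda>n. a1 n * \<delta>^n) sums (s0 + c + \<delta>) powr (1/2)" for \<delta>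
    using factor[of "s0 + c" 1 "1/2"] p1 unfolding a1_def by auto
  have b23: "abs_powser_le (a2 t) \<rho> (2 * p2 t powr (-1/2))" "abs_powser_le (a3 t) \<rho> (2 * p3 t powr (-1/2))"
    and s23: "\<bar>\<delta>\<bar> \<le> \<rho> \<Longrightarrow> (\<lambda>n. a2 t n * \<delta>^n) sums (p2 t + (1 + t) * \<delta>) powr (-1/2)"
      "\<bar>\<delta>\<bar> \<le> \<rho> \<Longrightarrow> (\<lambda>n. a3 t n * \<delta>^n) sums (p3 t + t * \<delta>) powr (-1/2)"
    if "0 < t" "t < 1" for t \<delta>
    using factor[of "p2 t" "1 + t" "-1/2"] factor[of "p3 t" t "-1/2"] ge[OF that] that
    unfolding a2_def a3_def by auto
  define B where "B = 2 * (s0 + c) powr (1/2) * (2 * (4 * \<rho>) powr (-1/2)) * (2 * (4 * \<rho>) powr (-1/2))"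
  have neg_half_le: "2 * p powr (-1/2) \<le> 2 * (4 * \<rho>) powr (-1/2)" if "4 * \<rho> \<le> p" for p
    using powr_mono2'[of "-1/2" "4 * \<rho>" p] that \<rho> by simp
  show ?thesis
  proof (rule that[of B])
    fix t :: real assume t: "0 < t" "t < 1"
    have "abs_powser_le (cauchy_prod (cauchy_prod a1 (a2 t)) (a3 t)) \<rho> B"
      unfolding B_def using \<rho> ge[OF t]
      by (intro abs_powser_le_cauchy_prod b1 abs_powser_le_mono[OF b23(1)[OF t] neg_half_le]
          abs_powser_le_mono[OF b23(2)[OF t] neg_half_le]) auto
    then have "abs_powser_le (\<lambda>n. (1 - t) powr (-1/2) * cauchy_prod (cauchy_prod a1 (a2 t)) (a3 t) n)
        \<rho> ((1 - t) powr (-1/2) * B)"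
      by (rule abs_powser_le_cmult) simp
    then show "abs_powser_le (\<lambda>n. J_coeff lam alpha s0 n t) (J_radius lam alpha s0) ((1 - t) powr (-1/2) * B)"
      by (simp add: J_coeff_def a1_def a2_def a3_def c_def p2_def p3_def \<rho>_def)
  next
    fix t \<delta> :: real assume t: "0 < t" "t < 1" and "\<bar>\<delta>\<bar> \<le> J_radius lam alpha s0"
    then have \<delta>: "\<bar>\<delta>\<bar> \<le> \<rho>" by (simp add: \<rho>_def)
    have "(\<lambda>n. cauchy_prod (cauchy_prod a1 (a2 t)) (a3 t) n * \<delta>^n) sums
        ((s0 + c + \<delta>) powr (1/2) * (p2 t + (1 + t) * \<delta>) powr (-1/2) * (p3 t + t * \<delta>) powr (-1/2))"
      using \<rho>
      by (intro cauchy_prod_sums[OF abs_powser_le_cauchy_prod[OF b1 b23(1)[OF t]] b23(2)[OF t] \<delta>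
            cauchy_prod_sums[OF b1 b23(1)[OF t] \<delta> s1[OF \<delta>] s23(1)[OF t \<delta>]] s23(2)[OF t \<delta>]]) simp
    from sums_mult[OF this, of "(1 - t) powr (-1/2)"]
    show "(\<lambda>n. J_coeff lam alpha s0 n t * \<delta>^n) sums J_kernel lam alpha (s0 + \<delta>) t"
      by (simp add: J_coeff_def J_kernel_def a1_def a2_def a3_def c_def p2_def p3_def algebra_simps)
  qed
qed

lemma J_expansion:
  fixes lam alpha s0 \<delta> :: real
  assumes alpha: "0 < alpha" and s0: "\<bar>lam^2 - alpha^2\<bar> < s0"
    and \<delta>: "\<bar>\<delta>\<bar> \<le> J_radius lam alpha s0"
  shows "set_integrable lborel (einterval 0 1) (J_kernel lam alpha (s0 + \<delta>))"
    and "(\<lambda>n. (LINT t:einterval 0 1|lborel. J_coeff lam alpha s0 n t) * \<delta>^n) sums J lam alpha (s0 + \<delta>)"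
proof -
  obtain B where bound: "\<And>t. 0 < t \<Longrightarrow> t < 1 \<Longrightarrow>
       abs_powser_le (\<lambda>n. J_coeff lam alpha s0 n t) (J_radius lam alpha s0) ((1 - t) powr (-1/2) * B)"
    and sums: "\<And>t. 0 < t \<Longrightarrow> t < 1 \<Longrightarrow>
       (\<lambda>n. J_coeff lam alpha s0 n t * \<delta>^n) sums J_kernel lam alpha (s0 + \<delta>) t"
    using J_coeff_series[OF alpha s0] \<delta> by metis
  note J_radius_bounds(1)[OF alpha s0]
  note expansion = powser_set_integral_sums[where S = "einterval 0 1" and c = "J_coeff lam alpha s0"
      and h = "J_kernel lam alpha (s0 + \<delta>)" and g = "\<lambda>t. (1 - t) powr (-1/2) * B", OF _ this \<delta>]
  have meas: "J_coeff lam alpha s0 n \<in> borel_measurable lborel"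
    "J_kernel lam alpha (s0 + \<delta>) \<in> borel_measurable lborel" for n
    unfolding J_coeff_def J_kernel_def cauchy_prod_def powr_affine_coeff_def by measurable
  have "set_integrable lborel (einterval 0 1) (\<lambda>t. (1 - t) powr (-1/2) * B)"
    using integral_one_minus_powr_neg_half(1) by (rule set_integrable_mult_left)
  then show "set_integrable lborel (einterval 0 1) (J_kernel lam alpha (s0 + \<delta>))"
    and "(\<lambda>n. (LINT t:einterval 0 1|lborel. J_coeff lam alpha s0 n t) * \<delta>^n) sums J lam alpha (s0 + \<delta>)"
    using expansion meas bound sums by (auto simp: J_def einterval_iff)
qed

lemma J_kernel_integrable:
  "0 < alpha \<Longrightarrow> \<bar>lam^2 - alpha^2\<bar> < s \<Longrightarrow> set_integrable lborel (einterval 0 1) (J_kernel lam alpha s)"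
  using J_expansion(1)[of alpha lam s 0] J_radius_bounds(1)[of alpha lam s] by simp

subsection \<open>Change of variables\<close>

lemma F_less_imp_sqrt_gt:
  fixes lam alpha E :: real
  assumes "F lam alpha < E"
  shows "0 < lam^4 + 4 * E" and "\<bar>lam^2 - alpha^2\<bar> < sqrt (lam^4 + 4 * E)"
proof -
  have "4 * F lam alpha + lam^4 = (lam^2 - alpha^2)^2"
    unfolding F_def by (simp add: power2_eq_square power4_eq_xxxx algebra_simps)
  then have lt: "(lam^2 - alpha^2)^2 < lam^4 + 4 * E" using assms by linarith
  then show "0 < lam^4 + 4 * E" by (rule le_less_trans[rotated]) simp
  from real_sqrt_less_mono[OF lt] show "\<bar>lam^2 - alpha^2\<bar> < sqrt (lam^4 + 4 * E)" by simp
qed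

lemma E_minus_F_subst:
  fixes lam alpha s E t :: real
  defines "c \<equiv> lam^2 - alpha^2"
  assumes s: "s^2 = lam^4 + 4 * E" and nonneg: "0 \<le> alpha^2 + (s + c) * t"
  shows "E - F lam (sqrt (alpha^2 + (s + c) * t)) = (s + c) * (1 - t) * (s * (1 + t) - c * (1 - t)) / 4"
proof -
  have "E - F lam (sqrt (alpha^2 + (s + c) * t))
      = E - (alpha^2 + (s + c) * t)^2 / 4 + lam^2 / 2 * (alpha^2 + (s + c) * t)"
    using power_mult[of "sqrt (alpha^2 + (s + c) * t)" 2 2] nonneg by (simp add: F_def)
  also have "\<dots> = (s + c) * (1 - t) * (s * (1 + t) - c * (1 - t)) / 4"
    using s unfolding c_def by (simp add: field_simps power2_eq_square power4_eq_xxxx)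
  finally show ?thesis .
qed

lemma L2_integrand_subst:
  fixes lam alpha s E t :: real
  defines "c \<equiv> lam^2 - alpha^2"
  assumes alpha: "0 < alpha" and s: "s^2 = lam^4 + 4 * E" "\<bar>c\<bar> < s" and t: "0 < t" "t < 1"
  shows "J_kernel lam alpha s t
      = 1 / sqrt (E - F lam (sqrt (alpha^2 + (s + c) * t))) * ((s + c) / (2 * sqrt (alpha^2 + (s + c) * t)))"
    and "0 < E - F lam (sqrt (alpha^2 + (s + c) * t))"
proof -
  define m where "m = s + c"
  define P2 where "P2 = s * (1 + t) - c * (1 - t)"
  define P3 where "P3 = alpha^2 + m * t"
  have m: "0 < m" and P2: "0 < P2" and P3: "0 < P3"
    using J_factors_ge[OF s(2)[unfolded c_def] t] J_radius_bounds[OF alpha s(2)[unfolded c_def]]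
    unfolding m_def P2_def P3_def c_def by linarith+
  have EF: "E - F lam (sqrt P3) = m * (1 - t) * P2 / 4"
    using E_minus_F_subst[OF s(1)] P3 unfolding P3_def m_def P2_def c_def by simp
  moreover have "0 < m * (1 - t) * P2 / 4" using m P2 t by simp
  ultimately show "0 < E - F lam (sqrt (alpha^2 + (s + c) * t))"
    unfolding P3_def m_def by linarith
  have "J_kernel lam alpha s t = sqrt m * (1 / sqrt P2) * (1 / sqrt P3) * (1 / sqrt (1 - t))"
    using m P2 P3 t unfolding J_kernel_def
    by (simp add: m_def P2_def P3_def c_def powr_half_sqrt powr_neg_half)
  also have "\<dots> = 1 / (sqrt m * sqrt (1 - t) * sqrt P2 / 2) * (sqrt m * sqrt m / (2 * sqrt P3))"
    using m P2 P3 t by (simp add: field_simps)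
  also have "\<dots> = 1 / sqrt (E - F lam (sqrt P3)) * (m / (2 * sqrt P3))"
    using m by (simp add: EF real_sqrt_mult real_sqrt_divide)
  finally show "J_kernel lam alpha s t
      = 1 / sqrt (E - F lam (sqrt (alpha^2 + (s + c) * t))) * ((s + c) / (2 * sqrt (alpha^2 + (s + c) * t)))"
    by (simp only: P3_def m_def)
qed

lemma L2_eq_J:
  fixes lam alpha E :: real
  assumes alpha: "0 < alpha" and E: "F lam alpha < E"
  shows "L2 lam alpha E = 2 * J lam alpha (sqrt (lam^4 + 4 * E))"
proof -
  define s where "s = sqrt (lam^4 + 4 * E)"
  define c where "c = lam^2 - alpha^2"
  define g where "g t = sqrt (alpha^2 + (s + c) * t)" for t
  define g' where "g' t = (s + c) / (2 * sqrt (alpha^2 + (s + c) * t))" for t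
  define f where "f k = 1 / sqrt (E - F lam k)" for k
  have s: "s^2 = lam^4 + 4 * E" "\<bar>c\<bar> < s"
    using F_less_imp_sqrt_gt[OF E] by (simp_all add: s_def c_def)
  have pos: "0 < alpha^2 + (s + c) * t" if "0 \<le> t" for t
    using alpha s(2) that by (intro add_pos_nonneg) auto
  note subst = L2_integrand_subst[OF alpha s[unfolded c_def], folded c_def]
  have "(LBINT k=ereal (g 0)..ereal (g 1). f k) = (LBINT t=0..1. f (g t) * g' t)"
  proof (rule interval_integral_substitution_nonneg(2))
    show "DERIV g t :> g' t" if "0 < ereal t" for t
      using that pos[of t] unfolding g_def g'_def
      by (auto intro!: derivative_eq_intros simp: field_simps)
    show "isCont f (g t)" if "0 < ereal t" "ereal t < 1" for t
    proof -
      have "isCont (\<lambda>k. E - F lam k) (g t)" unfolding F_def by (intro continuous_intros) simp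
      then have "isCont (\<lambda>k. sqrt (E - F lam k)) (g t)"
        by (rule continuous_at_compose[OF _ isCont_real_sqrt, unfolded comp_def])
      moreover have "sqrt (E - F lam (g t)) \<noteq> 0" using that subst(2)[of t] by (simp add: g_def)
      ultimately show ?thesis unfolding f_def by (rule isCont_divide[OF continuous_const])
    qed
    show "isCont g' t" if "0 < ereal t" "ereal t < 1" for t
      using that pos[of t] unfolding g'_def by (auto intro!: continuous_intros)
    show "0 \<le> f (g t)" if "0 < ereal t" "ereal t < 1" for t
      using that subst(2)[of t] unfolding f_def g_def by simp
    show "0 \<le> g' t" if "0 \<le> ereal t" "ereal t \<le> 1" for t
      using that pos[of t] s(2) unfolding g'_def by simp
    show "((ereal \<circ> g \<circ> real_of_ereal) \<longlongrightarrow> ereal (g 0)) (at_right 0)"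
      unfolding g_def by (auto simp: zero_ereal_def ereal_tendsto_simps intro!: tendsto_eq_intros)
    show "((ereal \<circ> g \<circ> real_of_ereal) \<longlongrightarrow> ereal (g 1)) (at_left 1)"
      unfolding g_def by (auto simp: one_ereal_def ereal_tendsto_simps intro!: tendsto_eq_intros)
    show "set_integrable lborel (einterval 0 1) (\<lambda>t. f (g t) * g' t)"
      using J_kernel_integrable[OF alpha s(2)[unfolded c_def]]
      by (rule set_integrable_cong[THEN iffD1, OF refl refl, rotated])
         (auto simp: einterval_iff subst(1) f_def g_def g'_def)
  qed simp
  also have "\<dots> = J lam alpha s"
    unfolding interval_lebesgue_integral_def J_def
    by (simp, rule set_lebesgue_integral_cong) (auto simp: einterval_iff subst(1) f_def g_def g'_def)
  finally show ?thesis
    using alpha by (simp add: L2_def kappaM_def f_def g_def s_def c_def add.commute)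
qed

lemma L2_analytic:
  fixes lam alpha :: real
  assumes alpha: "0 < alpha"
  shows "real_analytic_on (L2 lam alpha) {F lam alpha<..}"
  unfolding real_analytic_on_def
proof
  fix E0 assume "E0 \<in> {F lam alpha<..}"
  then have E0: "F lam alpha < E0" by simp
  define K where "K = lam^4 + 4 * E0"
  define \<rho> where "\<rho> = J_radius lam alpha (sqrt K)"
  define A where "A n = (LINT t:einterval 0 1|lborel. J_coeff lam alpha (sqrt K) n t)" for n
  have K: "0 < K" and s0: "\<bar>lam^2 - alpha^2\<bar> < sqrt K"
    using F_less_imp_sqrt_gt[OF E0] by (simp_all add: K_def)
  have \<rho>: "0 < \<rho>" using J_radius_bounds(1)[OF alpha s0] by (simp add: \<rho>_def)
  have J: "(\<lambda>n. A n * d^n) sums J lam alpha (sqrt K + d)" if "\<bar>d\<bar> < \<rho>" for d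
    using J_expansion(2)[OF alpha s0, of d] that by (simp add: A_def \<rho>_def)
  txt \<open>The three bounds keep \<open>y\<close> above \<open>F \<alpha>\<close>, keep \<open>4 (y - E0)\<close> inside the convergence
    disc of the square root, and keep the majorant of its series below the radius \<open>\<rho>\<close>.\<close>
  define R where "R = min ((E0 - F lam alpha) / 2) (min (K / 8) (\<rho> * sqrt K / 32))"
  have R: "0 < R" using E0 K \<rho> by (simp add: R_def)
  have R_le: "R \<le> K / 8" "R \<le> (E0 - F lam alpha) / 2" "R \<le> \<rho> * sqrt K / 32"
    unfolding R_def by (meson min.cobounded1 min.cobounded2 order_trans)+
  have "16 * R / sqrt K \<le> \<rho> / 2" using R_le(3) K by (simp add: divide_le_eq)
  then have R_small: "16 * R / sqrt K < \<rho>" using \<rho> by linarith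
  define b where "b k = (if k = 0 then 0 else powr_affine_coeff (1/2) K 4 k)" for k
  note sqrt_series = sqrt_shift_series[OF K R R_le(1), folded b_def]
  show "\<exists>r>0. \<exists>a. \<forall>y. \<bar>y - E0\<bar> < r \<longrightarrow> (\<lambda>n. a n * (y - E0)^n) sums L2 lam alpha y"
  proof (intro exI conjI allI impI)
    fix y assume y: "\<bar>y - E0\<bar> < R"
    have eq: "sqrt K + (sqrt (K + 4 * (y - E0)) - sqrt K) = sqrt (lam^4 + 4 * y)"
      by (simp add: K_def algebra_simps)
    have "(\<lambda>j. (\<Sum>n. A n * cauchy_pow b n j) * (y - E0)^j)
        sums J lam alpha (sqrt K + (sqrt (K + 4 * (y - E0)) - sqrt K))"
      using y R by (intro powser_compose_sums[OF J sqrt_series(1) R_small] sqrt_series(2)) auto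
    then have "(\<lambda>j. 2 * ((\<Sum>n. A n * cauchy_pow b n j) * (y - E0)^j))
        sums (2 * J lam alpha (sqrt (lam^4 + 4 * y)))"
      unfolding eq by (rule sums_mult)
    moreover have "F lam alpha < y" using y R_le(2) by (simp add: abs_less_iff)
    ultimately show "(\<lambda>j. (2 * (\<Sum>n. A n * cauchy_pow b n j)) * (y - E0)^j) sums L2 lam alpha y"
      by (simp add: L2_eq_J[OF alpha] mult.assoc)
  qed (fact R)
qed

subsection \<open>Decay for large energies\<close>

lemma inverse_sqrt_mult_le:
  fixes t :: real
  assumes "0 < t" "t < 1"
  shows "1 / (sqrt t * sqrt (1 - t)) \<le> 1 / sqrt t + 1 / sqrt (1 - t)"
proof -
  have "t \<le> sqrt t" "1 - t \<le> sqrt (1 - t)"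
    using assms by (simp_all add: real_le_rsqrt power2_eq_square mult_le_cancel_left1)
  then have "1 / (sqrt t * sqrt (1 - t)) \<le> (sqrt t + sqrt (1 - t)) / (sqrt t * sqrt (1 - t))"
    using assms by (intro divide_right_mono) auto
  also have "\<dots> = 1 / sqrt t + 1 / sqrt (1 - t)"
    using assms by (simp add: field_simps)
  finally show ?thesis .
qed

lemma J_kernel_le_large:
  fixes lam alpha s t :: real
  defines "c \<equiv> lam^2 - alpha^2"
  assumes alpha: "0 < alpha" and s: "0 < s" "2 * \<bar>c\<bar> < s" and t: "0 < t" "t < 1"
  shows "J_kernel lam alpha s t \<le> sqrt 2 / sqrt s * (t powr (-1/2) + (1 - t) powr (-1/2))"
proof -
  define m where "m = s + c"
  define P2 where "P2 = s * (1 + t) - c * (1 - t)"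
  define P3 where "P3 = alpha^2 + m * t"
  have m: "0 < m" using s unfolding m_def by linarith
  have "c * (1 - t) \<le> \<bar>c\<bar> * 1" using t by (intro mult_mono) auto
  moreover have "s \<le> s * (1 + t)" using s t by (simp add: mult_le_cancel_left1)
  ultimately have P2: "s / 2 \<le> P2" using s unfolding P2_def by linarith
  have mt: "0 < m * t" using m t by simp
  have P3: "m * t \<le> P3" unfolding P3_def by simp
  have P23: "0 < P2" "0 < P3" using P2 P3 s mt by linarith+
  then have "J_kernel lam alpha s t = sqrt m * (1 / sqrt P2) * (1 / sqrt P3) * (1 / sqrt (1 - t))"
    unfolding J_kernel_def c_def[symmetric] m_def[symmetric] P2_def[symmetric] P3_def[symmetric]
    using m t by (simp add: powr_half_sqrt powr_neg_half)
  also have "\<dots> \<le> sqrt m * (1 / sqrt (s / 2)) * (1 / sqrt (m * t)) * (1 / sqrt (1 - t))"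
  proof -
    have "1 / sqrt P2 \<le> 1 / sqrt (s / 2)"
      using P2 s by (intro divide_left_mono real_sqrt_le_mono mult_pos_pos) auto
    moreover have "1 / sqrt P3 \<le> 1 / sqrt (m * t)"
      using P3 mt by (intro divide_left_mono real_sqrt_le_mono mult_pos_pos) auto
    ultimately show ?thesis using m t s P23 by (intro mult_mono mult_right_mono mult_left_mono) auto
  qed
  also have "\<dots> = sqrt 2 / sqrt s * (1 / (sqrt t * sqrt (1 - t)))"
  proof -
    have "sqrt (m * t) = sqrt m * sqrt t" "sqrt (s / 2) = sqrt s / sqrt 2"
      by (simp_all add: real_sqrt_mult real_sqrt_divide)
    moreover have "0 < sqrt m" "0 < sqrt s" "0 < sqrt t" "0 < sqrt (1 - t)" using m s t by auto
    ultimately show ?thesis by (simp add: field_simps)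
  qed
  also have "\<dots> \<le> sqrt 2 / sqrt s * (1 / sqrt t + 1 / sqrt (1 - t))"
    by (rule mult_left_mono[OF inverse_sqrt_mult_le[OF t]]) (use s in simp)
  also have "\<dots> = sqrt 2 / sqrt s * (t powr (-1/2) + (1 - t) powr (-1/2))"
    using t by (simp add: powr_neg_half)
  finally show ?thesis .
qed

lemma J_le_large:
  fixes lam alpha s :: real
  assumes alpha: "0 < alpha" and s: "0 < s" "2 * \<bar>lam^2 - alpha^2\<bar> < s"
  shows "0 \<le> J lam alpha s" and "J lam alpha s \<le> 4 * sqrt 2 / sqrt s"
proof -
  have s1: "\<bar>lam^2 - alpha^2\<bar> < s" by (rule le_less_trans[OF _ s(2)]) simp
  have I: "set_integrable lborel (einterval 0 1) (\<lambda>t::real. t powr (-1/2) + (1 - t) powr (-1/2))"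
    using integral_powr_neg_half(1) integral_one_minus_powr_neg_half(1) by (rule set_integral_add(1))
  have "(LINT t:einterval 0 1|lborel. t powr (-1/2) + (1 - t) powr (-1/2)) = 4"
    using set_integral_add(2)[OF integral_powr_neg_half(1) integral_one_minus_powr_neg_half(1)]
      integral_powr_neg_half(2) integral_one_minus_powr_neg_half(2)
    by (simp add: interval_lebesgue_integral_def)
  moreover have "J lam alpha s \<le> (LINT t:einterval 0 1|lborel.
      sqrt 2 / sqrt s * (t powr (-1/2) + (1 - t) powr (-1/2)))"
    unfolding J_def
  proof (rule set_integral_mono)
    show "set_integrable lborel (einterval 0 1) (J_kernel lam alpha s)"
      by (rule J_kernel_integrable[OF alpha s1])
    show "set_integrable lborel (einterval 0 1)
        (\<lambda>t. sqrt 2 / sqrt s * (t powr (-1/2) + (1 - t) powr (-1/2)))"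
      using I by (rule set_integrable_mult_right)
    show "J_kernel lam alpha s t \<le> sqrt 2 / sqrt s * (t powr (-1/2) + (1 - t) powr (-1/2))"
      if "t \<in> einterval 0 1" for t
      using that by (intro J_kernel_le_large[OF alpha s]) (auto simp: einterval_iff)
  qed
  ultimately show "J lam alpha s \<le> 4 * sqrt 2 / sqrt s" by (simp add: mult.commute)
  show "0 \<le> J lam alpha s" unfolding J_def set_lebesgue_integral_def
    by (rule Bochner_Integration.integral_nonneg) (simp add: J_kernel_def)
qed

lemma L2_tendsto_0:
  fixes lam alpha :: real
  assumes alpha: "0 < alpha"
  shows "(L2 lam alpha \<longlongrightarrow> 0) at_top"
proof (rule tendsto_sandwich[where f = "\<lambda>_. 0"])
  have "filterlim (\<lambda>E::real. sqrt (lam^4 + 4 * E)) at_top at_top" by real_asymp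
  then have "eventually (\<lambda>E. 2 * \<bar>lam^2 - alpha^2\<bar> + 1 \<le> sqrt (lam^4 + 4 * E)) at_top"
    unfolding filterlim_at_top by blast
  with eventually_gt_at_top[of "F lam alpha"]
  have "eventually (\<lambda>E. 0 \<le> L2 lam alpha E
      \<and> L2 lam alpha E \<le> 2 * (4 * sqrt 2 / sqrt (sqrt (lam^4 + 4 * E)))) at_top"
  proof eventually_elim
    case (elim E)
    then have large: "2 * \<bar>lam^2 - alpha^2\<bar> < sqrt (lam^4 + 4 * E)" by linarith
    then have "0 < sqrt (lam^4 + 4 * E)" by (rule le_less_trans[rotated]) simp
    from J_le_large[OF alpha this large] L2_eq_J[OF alpha elim(1)] show ?case by linarith
  qed
  then show "eventually (\<lambda>E. 0 \<le> L2 lam alpha E) at_top"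
    and "eventually (\<lambda>E. L2 lam alpha E \<le> 2 * (4 * sqrt 2 / sqrt (sqrt (lam^4 + 4 * E)))) at_top"
    by (simp_all add: eventually_conj_iff)
  show "((\<lambda>E::real. 2 * (4 * sqrt 2 / sqrt (sqrt (lam^4 + 4 * E)))) \<longlongrightarrow> 0) at_top"
    by real_asymp
qed simp

theorem mainTheorem15:
  fixes lam :: real
  assumes "lam \<noteq> 0"
  shows "(\<forall>alpha>0. real_analytic_on (L2 lam alpha) {F lam alpha<..})
       \<and> (\<forall>alpha. 0 < alpha \<and> alpha < 2 * sqrt \<bar>lam\<bar> \<longrightarrow>
            (L2 lam alpha \<longlongrightarrow> 0) at_top)"
  using L2_analytic L2_tendsto_0 by blast

end
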